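(* There is a universal constant $C>0$ such that for all $s\geq 2$ and $r\geq 0$ the Euclidian-hyperboloidal time function $T$ satisfies $$ |\partial_s T(s,r)|\leq \begin{cases} C\,\dfrac{s}{(s^2+r^2)^{1/2}}, & r\leq -1+s^2/2,\\[2mm] C\Big(\dfrac{\xi(s,r)\,s}{(s^2+r^2)^{1/2}}+2(1-\xi(s,r))\,s\Big), & -1+s^2/2\leq r\leq s^2/2,\\[2mm] 2C\,s, & r\geq s^2/2. \end{cases} $$ (In the first region one has $T(s,r)=\sqrt{s^2+r^2}$, so the first bound is $C\,s/T(s,r)$.)
   Context: Let $\rho_1(y)=e^{-2/(1-(2y-1)^2)}$ for $0<y<1$ and $\rho_1(y)=0$ otherwise, let $\rho_0=\int_{\mathbb R}\rho_1$, and let $\chi(y)=\rho_0^{-1}\int_{-\infty}^y\rho_1(y')\,dy'$; so $\chi$ is smooth, $\chi=0$ on $(-\infty,0]$, $\chi=1$ on $[1,\infty)$, strictly increasing on $(0,1)$. For $s\geq 2$, $r\geq 0$ set $\xi(s,r)=1-\chi(r+1-s^2/2)$, so $\xi=1$ for $r\leq -1+s^2/2$ and $\xi=0$ for $r\geq s^2/2$. The function $T=T(s,r)$ ($s\geq 2$, $r\geq 0$) is defined by $\partial_r T(s,r)=\xi(s,r)\,\dfrac{r}{\sqrt{r^2+s^2}}$, $T(s,0)=s$. *)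

theory Defs
  imports "HOL-Analysis.Analysis"
begin

definition rho1 :: "real \<Rightarrow> real" where
  "rho1 y = (if 0 < y \<and> y < 1 then exp (- 2 / (1 - (2*y - 1)^2)) else 0)"

definition rho0 :: real where
  "rho0 = integral UNIV rho1"

definition chi :: "real \<Rightarrow> real" where
  "chi y = integral {..y} rho1 / rho0"

definition xi :: "real \<Rightarrow> real \<Rightarrow> real" where
  "xi s r = 1 - chi (r + 1 - s^2 / 2)"

text \<open>The unique solution of d/dr T = xi r / sqrt(r^2+s^2), T(s,0) = s.\<close>
definition T :: "real \<Rightarrow> real \<Rightarrow> real" where
  "T s r = s + integral {0..r} (\<lambda>r'. xi s r' * r' / sqrt (r'^2 + s^2))"

end

theory Submission
  imports Defs
begin

text \<open>
Differentiating under the integral sign, \<open>\<partial>\<^sub>s T(s,r)\<close> is \<open>1\<close> plus the integral over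
\<open>[0,r]\<close> of \<open>\<partial>\<^sub>s\<xi> \<cdot> t/\<surd>(t\<^sup>2+s\<^sup>2) - \<xi> \<cdot> t s/(t\<^sup>2+s\<^sup>2)\<^bsup>3/2\<^esup>\<close>, where
\<open>\<partial>\<^sub>s\<xi>(s,t) = s \<chi>'(t+1-s\<^sup>2/2) \<ge> 0\<close>. Since \<open>t/\<surd>(t\<^sup>2+s\<^sup>2) \<le> 1\<close>, the first part lies between
\<open>0\<close> and \<open>s(1 - \<xi>(s,r))\<close>. The kernel \<open>t s/(t\<^sup>2+s\<^sup>2)\<^bsup>3/2\<^esup>\<close> is the \<open>t\<close>-derivative of
\<open>-s/\<surd>(t\<^sup>2+s\<^sup>2)\<close> and \<open>0 \<le> \<xi> \<le> 1\<close> with \<open>\<xi> = 1\<close> for \<open>t \<le> s\<^sup>2/2-1\<close>, so the second part lies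
between \<open>1 - s/\<surd>(m\<^sup>2+s\<^sup>2)\<close> and \<open>1 - s/\<surd>(r\<^sup>2+s\<^sup>2)\<close>, \<open>m = min r (s\<^sup>2/2-1)\<close>. Hence
\<open>s/\<surd>(r\<^sup>2+s\<^sup>2) \<le> \<partial>\<^sub>s T \<le> s/\<surd>(m\<^sup>2+s\<^sup>2) + s(1 - \<xi>(s,r))\<close>, and the three bounds follow with
\<open>C = 3\<close>, using \<open>r \<le> 2m\<close> in the transition region.
\<close>

lemma rho1_nonneg: "0 \<le> rho1 y"
  by (simp add: rho1_def)

lemma rho1_eq_0: "y \<le> 0 \<or> 1 \<le> y \<Longrightarrow> rho1 y = 0"
  by (auto simp: rho1_def)

lemma exp_neg_inverse_le: "0 < t \<Longrightarrow> exp (- 1 / t) \<le> (t::real)"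
  using exp_ge_add_one_self[of "1/t"] by (simp add: exp_minus field_simps)

text \<open>This crude flatness of \<open>rho1\<close> is all that continuity at the ends of its support needs.\<close>

lemma rho1_le: "rho1 y \<le> 2 * \<bar>y\<bar>" "rho1 y \<le> 2 * \<bar>1 - y\<bar>"
proof -
  consider "y \<le> 0 \<or> 1 \<le> y" | "0 < y" "y < 1"
    by linarith
  then have "rho1 y \<le> 2 * \<bar>y\<bar> \<and> rho1 y \<le> 2 * \<bar>1 - y\<bar>"
  proof cases
    case 2
    have "1 - (2*y - 1)^2 = 4*y*(1-y)"
      by (simp add: power2_eq_square algebra_simps)
    then have "rho1 y = exp (- 1 / (2*y*(1-y)))"
      using 2 by (simp add: rho1_def divide_simps)
    also have "\<dots> \<le> 2*y*(1-y)"
      by (rule exp_neg_inverse_le) (use 2 in simp)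
    finally have "rho1 y \<le> 2*y*(1-y)" .
    moreover have "2*y*(1-y) \<le> 2*y"
      using 2 by (intro mult_left_le) auto
    moreover have "y*(2*(1-y)) \<le> 1*(2*(1-y))"
      using 2 by (intro mult_right_mono) auto
    ultimately have "rho1 y \<le> 2*y" "rho1 y \<le> 2*(1-y)"
      by linarith+
    then show ?thesis
      using 2 by simp
  qed (simp add: rho1_eq_0)
  then show "rho1 y \<le> 2 * \<bar>y\<bar>" "rho1 y \<le> 2 * \<bar>1 - y\<bar>"
    by auto
qed

lemma isCont_rho1: "isCont rho1 y"
proof -
  have vanishing: "isCont rho1 y" if "open U" "y \<in> U" "\<And>x. x \<in> U \<Longrightarrow> rho1 x = 0" for U
  proof -
    have "eventually (\<lambda>x. rho1 x = 0) (nhds y)"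
      using eventually_nhds_in_open[OF that(1,2)] by eventually_elim (use that(3) in auto)
    then show ?thesis using isCont_cong[of rho1 "\<lambda>_. 0" y] by simp
  qed
  consider "y < 0" | "y = 0" | "0 < y" "y < 1" | "y = 1" | "1 < y" by linarith
  then show ?thesis
  proof cases
    case 1
    then show ?thesis by (intro vanishing[of "{..<0}"]) (auto simp: rho1_eq_0)
  next
    case 5
    then show ?thesis by (intro vanishing[of "{1<..}"]) (auto simp: rho1_eq_0)
  next
    case 2
    have "(rho1 \<longlongrightarrow> 0) (at 0)"
      by (rule Lim_null_comparison[where g="\<lambda>x. 2*\<bar>x\<bar>"])
         (use rho1_le rho1_nonneg in \<open>auto intro!: always_eventually tendsto_eq_intros\<close>)
    then show ?thesis using 2 by (simp add: isCont_def rho1_eq_0)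
  next
    case 4
    have "(rho1 \<longlongrightarrow> 0) (at 1)"
      by (rule Lim_null_comparison[where g="\<lambda>x. 2*\<bar>1-x\<bar>"])
         (use rho1_le rho1_nonneg in \<open>auto intro!: always_eventually tendsto_eq_intros\<close>)
    then show ?thesis using 4 by (simp add: isCont_def rho1_eq_0)
  next
    case 3
    have "eventually (\<lambda>x. x \<in> {0<..<1}) (nhds y)"
      using 3 by (intro eventually_nhds_in_open) auto
    then have "eventually (\<lambda>x. rho1 x = exp (- 2 / (4*x*(1-x)))) (nhds y)"
      by eventually_elim (simp add: rho1_def power2_eq_square algebra_simps)
    moreover have "isCont (\<lambda>x. exp (- 2 / (4*x*(1-x)))) y"
      using 3 by (intro continuous_intros) auto
    ultimately show ?thesis by (simp add: isCont_cong)
  qed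
qed

lemma continuous_on_rho1 [continuous_intros]:
  "continuous_on S f \<Longrightarrow> continuous_on S (\<lambda>x. rho1 (f x))"
  by (rule continuous_on_compose2[of UNIV rho1])
     (auto simp: isCont_rho1 continuous_at_imp_continuous_on)

lemma rho1_integrable_on: "rho1 integrable_on {a..b}"
  by (rule integrable_continuous_interval) (intro continuous_intros)

lemma rho1_has_integral_rho0: "(rho1 has_integral rho0) UNIV"
proof -
  have "(rho1 has_integral integral {0..1} rho1) UNIV"
    by (rule has_integral_on_superset[where S="{0..1}"])
       (auto simp: rho1_integrable_on rho1_eq_0)
  then show ?thesis by (simp add: rho0_def integral_unique)
qed

lemma rho0_pos: "0 < rho0"
proof -
  have "0 < exp (-8/3::real) / 2"
    by simp
  also have "\<dots> \<le> integral {1/4..3/4} rho1"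
  proof -
    have "integral {1/4..3/4::real} (\<lambda>_. exp (-8/3)) \<le> integral {1/4..3/4} rho1"
    proof (rule integral_le)
      fix x :: real assume x: "x \<in> {1/4..3/4}"
      then have "\<bar>2*x-1\<bar> \<le> \<bar>1/2\<bar>"
        by (auto simp: abs_if)
      then have "(2*x-1)^2 \<le> (1/2)^2"
        by (simp only: abs_le_square_iff)
      then have "2 / (1 - (2*x-1)^2) \<le> 2 / (3/4)"
        by (intro divide_left_mono) (auto simp: power2_eq_square)
      then show "exp (-8/3) \<le> rho1 x"
        using x by (simp add: rho1_def)
    qed (auto simp: rho1_integrable_on)
    then show ?thesis by simp
  qed
  also have "\<dots> \<le> integral UNIV rho1"
    by (rule integral_subset_le) (use rho1_has_integral_rho0 in \<open>auto simp: rho1_integrable_on rho1_nonneg\<close>)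
  finally show ?thesis by (simp add: rho0_def)
qed

lemma chi_eq_integral:
  assumes "a \<le> 0" "a \<le> y"
  shows "chi y = integral {a..y} rho1 / rho0"
proof -
  have "((\<lambda>x. if x \<in> {a..y} then rho1 x else 0) has_integral integral {a..y} rho1) {..y}"
    using rho1_integrable_on by (subst has_integral_restrict) auto
  then have "(rho1 has_integral integral {a..y} rho1) {..y}"
    by (rule has_integral_cong[THEN iffD1, rotated]) (use assms in \<open>auto simp: rho1_eq_0\<close>)
  then show ?thesis by (simp add: chi_def integral_unique)
qed

lemma chi_eq_0: "y \<le> 0 \<Longrightarrow> chi y = 0"
  using chi_eq_integral[of y y] by simp

lemma chi_bounds: "0 \<le> chi y" "chi y \<le> 1"
proof -
  define a where "a = min y 0"
  have chi_eq: "chi y = integral {a..y} rho1 / rho0"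
    by (rule chi_eq_integral) (auto simp: a_def)
  have "0 \<le> integral {a..y} rho1"
    by (rule integral_nonneg) (auto simp: rho1_integrable_on rho1_nonneg)
  moreover have "integral {a..y} rho1 \<le> integral UNIV rho1"
    by (rule integral_subset_le) (use rho1_has_integral_rho0 in \<open>auto simp: rho1_integrable_on rho1_nonneg\<close>)
  ultimately show "0 \<le> chi y" "chi y \<le> 1"
    using rho0_pos by (auto simp: chi_eq rho0_def)
qed

lemma chi_has_real_derivative: "(chi has_real_derivative rho1 y / rho0) (at y)"
proof -
  define a where "a = min y 0 - 1"
  have "((\<lambda>x. integral {a..x} rho1) has_real_derivative rho1 y) (at y within {a..y+1})"
    by (rule integral_has_real_derivative) (auto simp: a_def intro: continuous_intros)
  then have "((\<lambda>x. integral {a..x} rho1) has_real_derivative rho1 y) (at y within {a<..<y+1})"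
    by (rule has_field_derivative_subset) auto
  then have "((\<lambda>x. integral {a..x} rho1) has_real_derivative rho1 y) (at y)"
    by (subst (asm) at_within_open) (auto simp: a_def)
  then have "((\<lambda>x. integral {a..x} rho1 / rho0) has_real_derivative rho1 y / rho0) (at y)"
    by (rule DERIV_cdivide)
  moreover have "eventually (\<lambda>x. x \<in> {a<..}) (nhds y)"
    by (intro eventually_nhds_in_open) (auto simp: a_def)
  then have "eventually (\<lambda>x. integral {a..x} rho1 / rho0 = chi x) (nhds y)"
    by eventually_elim (rule chi_eq_integral[symmetric], auto simp: a_def)
  ultimately show ?thesis
    using DERIV_cong_ev[of y y, OF refl _ refl] by simp
qed

lemma chi_has_real_derivative_chain [derivative_intros]:
  "(f has_real_derivative f') (at x within S) \<Longrightarrow>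
    ((\<lambda>x. chi (f x)) has_real_derivative rho1 (f x) / rho0 * f') (at x within S)"
  by (rule DERIV_chain2[OF chi_has_real_derivative])

lemma continuous_on_chi [continuous_intros]:
  "continuous_on S f \<Longrightarrow> continuous_on S (\<lambda>x. chi (f x))"
  by (rule continuous_on_compose2[of UNIV chi])
     (auto intro!: continuous_at_imp_continuous_on DERIV_isCont chi_has_real_derivative)

lemma xi_bounds: "0 \<le> xi s t" "xi s t \<le> 1"
  using chi_bounds by (auto simp: xi_def)

lemma xi_eq_1: "t \<le> s^2/2 - 1 \<Longrightarrow> xi s t = 1"
  by (simp add: xi_def chi_eq_0)

lemma sqrt_sum_squares_pos: "0 < s \<Longrightarrow> 0 < sqrt (t^2 + s^2)"
  by (simp add: add_nonneg_pos)

definition T_integrand :: "real \<Rightarrow> real \<Rightarrow> real" where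
  "T_integrand s t = xi s t * t / sqrt (t^2 + s^2)"

definition T_integrand_ds :: "real \<Rightarrow> real \<Rightarrow> real" where
  "T_integrand_ds s t =
     s * rho1 (t + 1 - s^2/2) / rho0 * (t / sqrt (t^2 + s^2)) - xi s t * (t * s / sqrt (t^2 + s^2) ^ 3)"

lemma xi_has_real_derivative:
  "((\<lambda>s. xi s t) has_real_derivative s * rho1 (t + 1 - s^2/2) / rho0) (at s within S)"
  unfolding xi_def by (auto intro!: derivative_eq_intros)

lemma T_integrand_has_real_derivative:
  assumes "0 < s"
  shows "((\<lambda>s. T_integrand s t) has_real_derivative T_integrand_ds s t) (at s within S)"
proof -
  define q where "q = sqrt (t^2 + s^2)"
  have q: "0 < q"
    using sqrt_sum_squares_pos[OF assms] by (simp add: q_def)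
  have "0 < t^2 + s^2"
    using assms by (simp add: add_nonneg_pos)
  then have dq: "((\<lambda>s. sqrt (t^2 + s^2)) has_real_derivative s / q) (at s within S)"
    unfolding q_def by (auto intro!: derivative_eq_intros simp: field_simps)
  have "((\<lambda>s. T_integrand s t) has_real_derivative
          ((s * rho1 (t + 1 - s^2/2) / rho0 * t + 0 * xi s t) * q - xi s t * t * (s / q)) / (q * q))
          (at s within S)"
    unfolding T_integrand_def q_def
    by (intro DERIV_divide DERIV_mult xi_has_real_derivative DERIV_const dq[unfolded q_def])
       (use assms in simp)
  moreover have "((a * t + 0 * x) * q - x * t * (s / q)) / (q * q) = a * (t / q) - x * (t * s / q ^ 3)"
    for a x
    using q by (simp add: field_simps power3_eq_cube)
  ultimately show ?thesis
    unfolding T_integrand_ds_def q_def[symmetric] by (rule DERIV_cong)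
qed

lemma continuous_on_T_integrand_ds:
  "continuous_on ({0<..} \<times> S) (\<lambda>(s, t). T_integrand_ds s t)"
  unfolding T_integrand_ds_def xi_def split_beta
  using rho0_pos sqrt_sum_squares_pos
  by (intro continuous_intros) (auto simp: mem_Times_iff less_imp_neq[symmetric])

lemma T_has_real_derivative:
  assumes "0 < s"
  shows "((\<lambda>s. T s r) has_real_derivative 1 + integral {0..r} (T_integrand_ds s)) (at s within {0<..})"
proof -
  have "((\<lambda>s. integral (cbox 0 r) (T_integrand s)) has_real_derivative integral (cbox 0 r) (T_integrand_ds s))
          (at s within {0<..})"
  proof (rule leibniz_rule_field_derivative)
    fix x :: real assume "x \<in> {0<..}"
    then show "T_integrand x integrable_on cbox 0 r"
      unfolding T_integrand_def xi_def
      by (intro integrable_continuous continuous_intros) (auto dest: sqrt_sum_squares_pos[of x] simp: less_imp_neq[symmetric])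
  qed (use assms T_integrand_has_real_derivative continuous_on_T_integrand_ds in auto)
  then show ?thesis
    unfolding T_def T_integrand_def[symmetric] cbox_interval
    by (intro derivative_eq_intros) auto
qed

lemma rho1_shift_has_integral:
  assumes "a \<le> b"
  shows "((\<lambda>t. rho1 (t + c) / rho0) has_integral chi (b + c) - chi (a + c)) {a..b}"
proof (rule fundamental_theorem_of_calculus)
  fix t assume "t \<in> {a..b}"
  have "((\<lambda>t. chi (t + c)) has_real_derivative rho1 (t + c) / rho0 * 1) (at t within {a..b})"
    by (auto intro!: derivative_eq_intros)
  then show "((\<lambda>t. chi (t + c)) has_vector_derivative rho1 (t + c) / rho0) (at t within {a..b})"
    by (simp add: has_real_derivative_iff_has_vector_derivative)
qed (use assms in simp)

lemma t_s_div_sqrt_cube_has_integral: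
  assumes "0 < s" "0 \<le> m"
  shows "((\<lambda>t. t * s / sqrt (t^2 + s^2) ^ 3) has_integral 1 - s / sqrt (m^2 + s^2)) {0..m}"
proof -
  have "((\<lambda>t. - s / sqrt (t^2 + s^2)) has_real_derivative t * s / sqrt (t^2 + s^2) ^ 3) (at t within {0..m})" for t
  proof -
    define q where "q = sqrt (t^2 + s^2)"
    have q: "0 < q"
      using sqrt_sum_squares_pos[OF assms(1)] by (simp add: q_def)
    have "0 < t^2 + s^2"
      using assms(1) by (simp add: add_nonneg_pos)
    then have "((\<lambda>t. - s / sqrt (t^2 + s^2)) has_real_derivative (0 * q - - s * (t / q)) / (q * q))
                 (at t within {0..m})"
      unfolding q_def by (intro DERIV_divide DERIV_const) (auto intro!: derivative_eq_intros simp: field_simps)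
    moreover have "(0 * q - - s * (t / q)) / (q * q) = t * s / q ^ 3"
      using q by (simp add: field_simps power3_eq_cube)
    ultimately show ?thesis
      unfolding q_def[symmetric] by (rule DERIV_cong)
  qed
  then have "((\<lambda>t. t * s / sqrt (t^2 + s^2) ^ 3) has_integral
               - s / sqrt (m^2 + s^2) - (- s / sqrt (0^2 + s^2))) {0..m}"
    by (intro fundamental_theorem_of_calculus)
       (use assms in \<open>auto simp: has_real_derivative_iff_has_vector_derivative\<close>)
  then show ?thesis
    using assms by simp
qed

lemma xi_weighted_kernel_integral_bounds:
  assumes "0 < s" "0 \<le> m" "m \<le> r" and xi_m: "\<And>t. t \<le> m \<Longrightarrow> xi s t = 1"
  shows "1 - s / sqrt (m^2 + s^2) \<le> integral {0..r} (\<lambda>t. xi s t * (t * s / sqrt (t^2 + s^2) ^ 3))"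
    and "integral {0..r} (\<lambda>t. xi s t * (t * s / sqrt (t^2 + s^2) ^ 3)) \<le> 1 - s / sqrt (r^2 + s^2)"
proof -
  define k where "k t = t * s / sqrt (t^2 + s^2) ^ 3" for t
  have k_nonneg: "0 \<le> k t" if "0 \<le> t" for t
    using that assms(1) by (simp add: k_def)
  have "continuous_on UNIV (\<lambda>t. xi s t * k t)"
    unfolding k_def xi_def using sqrt_sum_squares_pos[OF assms(1)]
    by (intro continuous_intros) (auto simp: less_imp_neq[symmetric])
  then have integrable: "(\<lambda>t. xi s t * k t) integrable_on {a..b}" for a b
    by (rule integrable_continuous_interval[OF continuous_on_subset]) auto
  have k_integral: "(k has_integral 1 - s / sqrt (x^2 + s^2)) {0..x}" if "0 \<le> x" for x
    unfolding k_def using assms(1) that by (rule t_s_div_sqrt_cube_has_integral)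
  have "integral {0..m} (\<lambda>t. xi s t * k t) = integral {0..m} k"
    by (rule integral_cong) (simp add: xi_m)
  also have "\<dots> = 1 - s / sqrt (m^2 + s^2)"
    using k_integral[OF assms(2)] by (rule integral_unique)
  moreover have "0 \<le> integral {m..r} (\<lambda>t. xi s t * k t)"
    using assms(2) xi_bounds k_nonneg by (intro integral_nonneg integrable) auto
  moreover have "integral {0..m} (\<lambda>t. xi s t * k t) + integral {m..r} (\<lambda>t. xi s t * k t)
                   = integral {0..r} (\<lambda>t. xi s t * k t)"
    using assms(2,3) integrable by (intro Henstock_Kurzweil_Integration.integral_combine) auto
  ultimately show "1 - s / sqrt (m^2 + s^2) \<le> integral {0..r} (\<lambda>t. xi s t * (t * s / sqrt (t^2 + s^2) ^ 3))"
    by (simp add: k_def)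
  have "integral {0..r} (\<lambda>t. xi s t * k t) \<le> integral {0..r} k"
    using k_integral[of r] assms(2,3) xi_bounds k_nonneg
    by (intro integral_le integrable) (auto intro!: mult_left_le_one_le)
  also have "\<dots> = 1 - s / sqrt (r^2 + s^2)"
    using k_integral assms(2,3) by (intro integral_unique) simp
  finally show "integral {0..r} (\<lambda>t. xi s t * (t * s / sqrt (t^2 + s^2) ^ 3)) \<le> 1 - s / sqrt (r^2 + s^2)"
    by (simp add: k_def)
qed

lemma xi_ds_weighted_integral_bounds:
  assumes "0 < s" "2 \<le> s^2" "0 \<le> r"
  shows "0 \<le> integral {0..r} (\<lambda>t. s * rho1 (t + 1 - s^2/2) / rho0 * (t / sqrt (t^2 + s^2)))"
    and "integral {0..r} (\<lambda>t. s * rho1 (t + 1 - s^2/2) / rho0 * (t / sqrt (t^2 + s^2))) \<le> (1 - xi s r) * s"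
proof -
  define g where "g t = s * rho1 (t + 1 - s^2/2) / rho0" for t
  have g_nonneg: "0 \<le> g t" for t
    using assms(1) rho0_pos rho1_nonneg by (simp add: g_def)
  have "continuous_on UNIV (\<lambda>t. g t * (t / sqrt (t^2 + s^2)))"
    unfolding g_def using sqrt_sum_squares_pos[OF assms(1)] rho0_pos
    by (intro continuous_intros) (auto simp: less_imp_neq[symmetric])
  then have integrable: "(\<lambda>t. g t * (t / sqrt (t^2 + s^2))) integrable_on {0..r}"
    by (rule integrable_continuous_interval[OF continuous_on_subset]) auto
  have "chi (0 + (1 - s^2/2)) = 0"
    using assms(2) by (intro chi_eq_0) simp
  then have g_integral: "(g has_integral (1 - xi s r) * s) {0..r}"
    using has_integral_mult_right[OF rho1_shift_has_integral[OF assms(3), of "1 - s^2/2"], of s]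
    unfolding g_def xi_def by (simp add: algebra_simps)
  have ratio_le_1: "t / sqrt (t^2 + s^2) \<le> 1" for t
    using assms(1) real_le_rsqrt[of t "t^2 + s^2"] sqrt_sum_squares_pos[OF assms(1), of t] by simp
  have "0 \<le> integral {0..r} (\<lambda>t. g t * (t / sqrt (t^2 + s^2)))"
    using integrable g_nonneg assms(1) by (intro integral_nonneg) auto
  then show "0 \<le> integral {0..r} (\<lambda>t. s * rho1 (t + 1 - s^2/2) / rho0 * (t / sqrt (t^2 + s^2)))"
    by (simp only: g_def)
  have "integral {0..r} (\<lambda>t. g t * (t / sqrt (t^2 + s^2))) \<le> integral {0..r} g"
    using mult_left_le[OF ratio_le_1 g_nonneg]
    by (intro integral_le integrable has_integral_integrable[OF g_integral])
  then show "integral {0..r} (\<lambda>t. s * rho1 (t + 1 - s^2/2) / rho0 * (t / sqrt (t^2 + s^2))) \<le> (1 - xi s r) * s"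
    using g_integral by (simp add: g_def integral_unique)
qed

lemma T_derivative_bounds:
  assumes "2 \<le> s" "0 \<le> r"
  shows "s / sqrt (r^2 + s^2) \<le> 1 + integral {0..r} (T_integrand_ds s)"
    and "1 + integral {0..r} (T_integrand_ds s)
           \<le> s / sqrt (min r (s^2/2 - 1)^2 + s^2) + (1 - xi s r) * s"
proof -
  have s: "0 < s" "4 \<le> s^2"
    using assms(1) power_mono[of 2 s 2] by auto
  have q: "sqrt (t^2 + s^2) \<noteq> 0" for t
    using sqrt_sum_squares_pos[OF s(1), of t] by linarith
  define A where "A t = s * rho1 (t + 1 - s^2/2) / rho0 * (t / sqrt (t^2 + s^2))" for t
  define B where "B t = xi s t * (t * s / sqrt (t^2 + s^2) ^ 3)" for t
  have "continuous_on {0..r} A" "continuous_on {0..r} B"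
    unfolding A_def B_def xi_def using q rho0_pos
    by (intro continuous_intros; simp)+
  then have "A integrable_on {0..r}" "B integrable_on {0..r}"
    by (simp_all add: integrable_continuous_interval)
  then have "integral {0..r} (T_integrand_ds s) = integral {0..r} A - integral {0..r} B"
    unfolding T_integrand_ds_def A_def[symmetric] B_def[symmetric] by (rule integral_diff)
  moreover have "0 \<le> integral {0..r} A" "integral {0..r} A \<le> (1 - xi s r) * s"
    unfolding A_def using xi_ds_weighted_integral_bounds[of s r] s assms(2) by auto
  moreover have "1 - s / sqrt (min r (s^2/2 - 1)^2 + s^2) \<le> integral {0..r} B"
    "integral {0..r} B \<le> 1 - s / sqrt (r^2 + s^2)"
    unfolding B_def using xi_weighted_kernel_integral_bounds[OF s(1), of "min r (s^2/2 - 1)" r]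
    using s(2) assms(2) by (auto simp: xi_eq_1)
  ultimately show "s / sqrt (r^2 + s^2) \<le> 1 + integral {0..r} (T_integrand_ds s)"
    "1 + integral {0..r} (T_integrand_ds s) \<le> s / sqrt (min r (s^2/2 - 1)^2 + s^2) + (1 - xi s r) * s"
    by linarith+
qed

lemma div_sqrt_sum_squares_le_twice:
  fixes s r m :: real
  assumes "0 < s" "0 \<le> r" "r \<le> 2 * m"
  shows "s / sqrt (m^2 + s^2) \<le> 2 * s / sqrt (r^2 + s^2)"
proof -
  have "r^2 \<le> 4 * m^2"
    using power_mono[of r "2 * m" 2] assms by (simp add: power_mult_distrib)
  moreover have "0 \<le> s^2"
    by simp
  ultimately have "r^2 + s^2 \<le> 4 * (m^2 + s^2)"
    unfolding distrib_left by linarith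
  then have "sqrt (r^2 + s^2) \<le> sqrt 4 * sqrt (m^2 + s^2)"
    by (metis real_sqrt_le_mono real_sqrt_mult)
  then have "sqrt (r^2 + s^2) \<le> 2 * sqrt (m^2 + s^2)"
    by simp
  then show ?thesis
    using assms(1) sqrt_sum_squares_pos[OF assms(1)] by (simp add: field_simps)
qed

lemma T_derivative_region_bounds:
  assumes "2 \<le> s" "0 \<le> r"
  defines "D \<equiv> 1 + integral {0..r} (T_integrand_ds s)"
  shows "r \<le> -1 + s^2/2 \<Longrightarrow> \<bar>D\<bar> \<le> s / sqrt (s^2 + r^2)"
    and "-1 + s^2/2 \<le> r \<Longrightarrow> r \<le> s^2/2 \<Longrightarrow>
           \<bar>D\<bar> \<le> 2 * (xi s r * s / sqrt (s^2 + r^2)) + 3 * (1 - xi s r) * s"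
    and "\<bar>D\<bar> \<le> 2 * s"
proof -
  have s: "0 < s" "4 \<le> s^2"
    using assms(1) power_mono[of 2 s 2] by auto
  define a where "a = s / sqrt (s^2 + r^2)"
  define m where "m = min r (s^2/2 - 1)"
  have lower: "a \<le> D" and upper: "D \<le> s / sqrt (m^2 + s^2) + (1 - xi s r) * s"
    using T_derivative_bounds[OF assms(1,2)] by (simp_all add: D_def a_def m_def add.commute)
  have a: "0 < a" "a \<le> 1"
    using s real_le_rsqrt[of s "s^2 + r^2"] sqrt_sum_squares_pos[of s r] by (auto simp: a_def add.commute)
  then have abs_D: "\<bar>D\<bar> = D"
    using lower by simp
  have xi: "0 \<le> xi s r" "xi s r \<le> 1"
    by (fact xi_bounds)+
  show "\<bar>D\<bar> \<le> s / sqrt (s^2 + r^2)" if "r \<le> -1 + s^2/2"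
    using that upper abs_D by (simp add: m_def xi_eq_1 add.commute)
  show "\<bar>D\<bar> \<le> 2 * (xi s r * s / sqrt (s^2 + r^2)) + 3 * (1 - xi s r) * s"
    if "-1 + s^2/2 \<le> r" "r \<le> s^2/2"
  proof -
    have "s / sqrt (m^2 + s^2) \<le> 2 * a"
      using div_sqrt_sum_squares_le_twice[of s r m] s assms(2) that
      by (auto simp: a_def m_def min_def add.commute)
    moreover have "(1 - xi s r) * a \<le> (1 - xi s r) * s"
      using xi a assms(1) by (intro mult_left_mono) auto
    ultimately show ?thesis
      using upper abs_D unfolding a_def[symmetric] times_divide_eq_right[symmetric]
      by (simp add: algebra_simps)
  qed
  have "s / sqrt (m^2 + s^2) \<le> 1"
    using s real_le_rsqrt[of s "m^2 + s^2"] sqrt_sum_squares_pos[of s m] by auto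
  moreover have "(1 - xi s r) * s \<le> s"
    using xi s by (simp add: mult_left_le_one_le)
  ultimately show "\<bar>D\<bar> \<le> 2 * s"
    using upper abs_D assms(1) by linarith
qed

theorem lemma6p1:
  shows "\<exists>C>0. \<forall>s r. s \<ge> 2 \<and> r \<ge> 0 \<longrightarrow>
    (\<exists>D. ((\<lambda>\<sigma>. T \<sigma> r) has_real_derivative D) (at s within {2..}) \<and>
      (r \<le> -1 + s^2/2 \<longrightarrow> \<bar>D\<bar> \<le> C * s / sqrt (s^2 + r^2)) \<and>
      (-1 + s^2/2 \<le> r \<and> r \<le> s^2/2 \<longrightarrow>
         \<bar>D\<bar> \<le> C * (xi s r * s / sqrt (s^2 + r^2) + 2 * (1 - xi s r) * s)) \<and>
      (r \<ge> s^2/2 \<longrightarrow> \<bar>D\<bar> \<le> 2 * C * s))"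
proof (rule exI[of _ 3], intro conjI allI impI)
  fix s r :: real
  assume "s \<ge> 2 \<and> r \<ge> 0"
  then have s: "2 \<le> s" and r: "0 \<le> r"
    by auto
  define D where "D = 1 + integral {0..r} (T_integrand_ds s)"
  define a where "a = s / sqrt (s^2 + r^2)"
  define b where "b = (1 - xi s r) * s"
  note bounds = T_derivative_region_bounds[OF s r, folded D_def]
  have nonneg: "0 \<le> a" "0 \<le> xi s r * a" "0 \<le> b"
    using xi_bounds[of s r] s by (auto simp: a_def b_def)
  have "((\<lambda>\<sigma>. T \<sigma> r) has_real_derivative D) (at s within {0<..})"
    using s unfolding D_def by (intro T_has_real_derivative) simp
  then have deriv: "((\<lambda>\<sigma>. T \<sigma> r) has_real_derivative D) (at s within {2..})"
    by (rule has_field_derivative_subset) auto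
  have "r \<le> -1 + s^2/2 \<Longrightarrow> \<bar>D\<bar> \<le> 3 * a"
    using bounds(1) nonneg by (simp add: a_def)
  moreover have "-1 + s^2/2 \<le> r \<Longrightarrow> r \<le> s^2/2 \<Longrightarrow> \<bar>D\<bar> \<le> 3 * (xi s r * a + 2 * b)"
  proof -
    assume "-1 + s^2/2 \<le> r" "r \<le> s^2/2"
    then have "\<bar>D\<bar> \<le> 2 * (xi s r * a) + 3 * b"
      using bounds(2) by (simp add: a_def b_def algebra_simps)
    then show ?thesis
      using nonneg unfolding distrib_left by linarith
  qed
  moreover have "\<bar>D\<bar> \<le> 2 * 3 * s"
    using bounds(3) s by simp
  ultimately show "\<exists>D. ((\<lambda>\<sigma>. T \<sigma> r) has_real_derivative D) (at s within {2..}) \<and>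
      (r \<le> -1 + s^2/2 \<longrightarrow> \<bar>D\<bar> \<le> 3 * s / sqrt (s^2 + r^2)) \<and>
      (-1 + s^2/2 \<le> r \<and> r \<le> s^2/2 \<longrightarrow>
         \<bar>D\<bar> \<le> 3 * (xi s r * s / sqrt (s^2 + r^2) + 2 * (1 - xi s r) * s)) \<and>
      (r \<ge> s^2/2 \<longrightarrow> \<bar>D\<bar> \<le> 2 * 3 * s)"
    using deriv unfolding a_def b_def times_divide_eq_right mult.assoc by blast
qed simp

end
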